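(* Let $m,n\ge 1$ and let $$K=\begin{bmatrix} A & B^T\\ B & -C\end{bmatrix}\in\mathbb{R}^{(m+n)\times(m+n)},$$ where $A\in\mathbb{R}^{m\times m}$ is symmetric positive definite, $B\in\mathbb{R}^{n\times m}$ has rank $n$, and $C\in\mathbb{R}^{n\times n}$ is symmetric positive semidefinite. Let $K=LJ_{m+n}L^T$ be a generalized Cholesky factorization of $K$. Let $\Delta K\in\mathbb{R}^{(m+n)\times(m+n)}$ be symmetric and suppose $$\|L^{-1}\|_2^2\,\|\Delta K\|_F<\tfrac12 .$$ Then $K+\Delta K$ has a generalized Cholesky factorization $$K+\Delta K=(L+\Delta L)J_{m+n}(L+\Delta L)^T,$$ where $L+\Delta L$ has the same block lower-triangular structure as $L$, and $$\|\Delta L\|_F\le \frac{\sqrt2\,\|L^{-1}\|_2\left[\inf_{D\in\mathbb{D}_{m+n}}\kappa_2(LD^{-1})\right]}{\sqrt2-1+\sqrt{1-2\|L^{-1}\|_2^2\|\Delta K\|_F}}\,\|\Delta K\|_F\le (2+\sqrt2)\,\|L^{-1}\|_2\left[\inf_{D\in\mathbb{D}_{m+n}}\kappa_2(LD^{-1})\right]\|\Delta K\|_F .$$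
   Context: $J_{m+n}=\begin{bmatrix} I_m&0\\0&-I_n\end{bmatrix}$. A generalized Cholesky factorization of a matrix $M\in\mathbb{R}^{(m+n)\times(m+n)}$ is a factorization $M=LJ_{m+n}L^T$ with $L=\begin{bmatrix}L_{11}&0\\L_{21}&L_{22}\end{bmatrix}$, where $L_{11}\in\mathbb{R}^{m\times m}$ and $L_{22}\in\mathbb{R}^{n\times n}$ are nonsingular lower triangular and $L_{21}\in\mathbb{R}^{n\times m}$ (so $L$ is nonsingular lower triangular); $L$ is called a generalized Cholesky factor. $\|\cdot\|_2$ is the spectral norm, $\|\cdot\|_F$ the Frobenius norm, $\kappa_2(X)=\|X\|_2\|X^{-1}\|_2$ for nonsingular $X$. $\mathbb{D}_{m+n}$ denotes the set of $(m+n)\times(m+n)$ diagonal matrices with positive diagonal entries. *)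

theory Defs
  imports "Jordan_Normal_Form.Matrix" "Jordan_Normal_Form.DL_Rank"
begin

definition symmetric_mat :: "real mat \<Rightarrow> bool" where
  "symmetric_mat A \<longleftrightarrow> square_mat A \<and> transpose_mat A = A"

definition pos_def_mat :: "real mat \<Rightarrow> bool" where
  "pos_def_mat A \<longleftrightarrow> square_mat A \<and> symmetric_mat A \<and>
     (\<forall>x \<in> carrier_vec (dim_row A). x \<noteq> 0\<^sub>v (dim_row A) \<longrightarrow> x \<bullet> (A *\<^sub>v x) > 0)"

definition pos_semidef_mat :: "real mat \<Rightarrow> bool" where
  "pos_semidef_mat A \<longleftrightarrow> square_mat A \<and> symmetric_mat A \<and>
     (\<forall>x \<in> carrier_vec (dim_row A). x \<bullet> (A *\<^sub>v x) \<ge> 0)"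

definition lower_triangular_mat :: "real mat \<Rightarrow> bool" where
  "lower_triangular_mat A \<longleftrightarrow> (\<forall>i<dim_row A. \<forall>j<dim_col A. i < j \<longrightarrow> A $$ (i,j) = 0)"

definition inv_mat :: "real mat \<Rightarrow> real mat" where
  "inv_mat A = (SOME B. inverts_mat A B \<and> inverts_mat B A)"

definition vnorm2 :: "real vec \<Rightarrow> real" where
  "vnorm2 x = sqrt (x \<bullet> x)"

definition spec_norm :: "real mat \<Rightarrow> real" where
  "spec_norm A = Sup {vnorm2 (A *\<^sub>v x) | x. x \<in> carrier_vec (dim_col A) \<and> vnorm2 x = 1}"

definition frob_norm :: "real mat \<Rightarrow> real" where
  "frob_norm A = sqrt (\<Sum>i<dim_row A. \<Sum>j<dim_col A. (A $$ (i,j))\<^sup>2)"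

definition kappa2 :: "real mat \<Rightarrow> real" where
  "kappa2 X = spec_norm X * spec_norm (inv_mat X)"

definition pos_diag_mats :: "nat \<Rightarrow> real mat set" where
  "pos_diag_mats N = {D. D \<in> carrier_mat N N \<and> diagonal_mat D \<and> (\<forall>i<N. D $$ (i,i) > 0)}"

definition Jmat :: "nat \<Rightarrow> nat \<Rightarrow> real mat" where
  "Jmat m n = four_block_mat (1\<^sub>m m) (0\<^sub>m m n) (0\<^sub>m n m) (- (1\<^sub>m n))"

definition gen_chol_factor :: "nat \<Rightarrow> nat \<Rightarrow> real mat \<Rightarrow> real mat \<Rightarrow> bool" where
  "gen_chol_factor m n M L \<longleftrightarrow>
     (\<exists>L11 L21 L22.
        L11 \<in> carrier_mat m m \<and> L21 \<in> carrier_mat n m \<and> L22 \<in> carrier_mat n n \<and>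
        lower_triangular_mat L11 \<and> invertible_mat L11 \<and>
        lower_triangular_mat L22 \<and> invertible_mat L22 \<and>
        L = four_block_mat L11 (0\<^sub>m m n) L21 L22) \<and>
     M = L * Jmat m n * transpose_mat L"

end

theory Submission
  imports Defs "Jordan_Normal_Form.Determinant" "HOL-Analysis.L2_Norm"
begin

(* Write the perturbed factor as L + \<Delta>L = L (I + F J).  Then
   K + \<Delta>K = (L + \<Delta>L) J (L + \<Delta>L)^T  is equivalent to
        F + F^T = E - F J F^T,        E = L^{-1} \<Delta>K L^{-T},
   and a lower triangular solution is a fixed point of the map
        \<Phi>(F) = lower_half (E - F J F^T),
   where lower_half keeps the strictly lower part and half the diagonal.
   Since lower_half shrinks the Frobenius norm of a symmetric matrix by 1/sqrt 2,
   \<Phi> maps the Frobenius ball of radius g = (1 - sqrt(1 - 2t))/sqrt 2 into itself,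
   t = \<parallel>L^{-1}\<parallel>\<^sub>2\<^sup>2 \<parallel>\<Delta>K\<parallel>\<^sub>F, and is a contraction there; the iteration from 0
   converges to a fixed point F.  For any positive diagonal D the fixed-point
   equation gives \<parallel>D F\<parallel>\<^sub>F (1 - g) \<le> \<parallel>D L^{-1}\<parallel>\<^sub>2 \<parallel>L^{-1}\<parallel>\<^sub>2 \<parallel>\<Delta>K\<parallel>\<^sub>F, hence
   \<parallel>\<Delta>L\<parallel>\<^sub>F \<le> \<parallel>L D^{-1}\<parallel>\<^sub>2 \<parallel>D F\<parallel>\<^sub>F \<le> \<kappa>\<^sub>2(L D^{-1}) \<parallel>L^{-1}\<parallel>\<^sub>2 \<parallel>\<Delta>K\<parallel>\<^sub>F / (1 - g). *)

section \<open>Frobenius and spectral norms\<close>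

text \<open>The Frobenius norm is the L2 norm of the family of entries, so the library facts about \<open>L2_set\<close> apply.\<close>
lemma frob_L2: "frob_norm A = L2_set (\<lambda>p. A $$ p) ({..<dim_row A} \<times> {..<dim_col A})"
  unfolding frob_norm_def L2_set_def by (simp add: sum.cartesian_product case_prod_beta)

lemma frob_nonneg: "frob_norm A \<ge> 0"
  by (simp add: frob_norm_def sum_nonneg)

lemma frob_sq: "(frob_norm A)\<^sup>2 = (\<Sum>i<dim_row A. \<Sum>j<dim_col A. (A $$ (i,j))\<^sup>2)"
  unfolding frob_norm_def by (simp add: sum_nonneg)

lemma frob_add:
  assumes "A \<in> carrier_mat r c" "B \<in> carrier_mat r c"
  shows "frob_norm (A + B) \<le> frob_norm A + frob_norm B"
proof -
  have "frob_norm (A + B) = L2_set (\<lambda>p. A $$ p + B $$ p) ({..<r} \<times> {..<c})"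
    unfolding frob_L2 using assms by (intro L2_set_cong) auto
  also have "\<dots> \<le> frob_norm A + frob_norm B"
    unfolding frob_L2 using assms by (simp add: L2_set_triangle_ineq)
  finally show ?thesis .
qed

lemma frob_uminus: "frob_norm (- A) = frob_norm A"
  unfolding frob_norm_def by simp

lemma frob_diff:
  assumes "A \<in> carrier_mat r c" "B \<in> carrier_mat r c"
  shows "frob_norm (A - B) \<le> frob_norm A + frob_norm B"
proof -
  have "A - B = A + (- B)" using assms by auto
  thus ?thesis using frob_add[OF assms(1), of "- B"] assms frob_uminus[of B] by auto
qed

lemma frob_entry:
  assumes "i < dim_row A" "j < dim_col A"
  shows "\<bar>A $$ (i,j)\<bar> \<le> frob_norm A"
proof -
  have "(A $$ (i,j))\<^sup>2 \<le> (\<Sum>j<dim_col A. (A $$ (i,j))\<^sup>2)"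
    using assms by (intro member_le_sum) auto
  also have "\<dots> \<le> (\<Sum>i<dim_row A. \<Sum>j<dim_col A. (A $$ (i,j))\<^sup>2)"
    using assms by (intro member_le_sum[where f = "\<lambda>i. \<Sum>j<dim_col A. (A $$ (i,j))\<^sup>2"])
      (auto intro: sum_nonneg)
  finally have "sqrt ((A $$ (i,j))\<^sup>2) \<le> frob_norm A"
    unfolding frob_norm_def by (rule real_sqrt_le_mono)
  thus ?thesis by simp
qed

lemma frob_transpose: "frob_norm (transpose_mat A) = frob_norm A"
  unfolding frob_norm_def by (simp, subst sum.swap, simp)

lemma frob_tendsto:
  assumes X: "\<And>k. X k \<in> carrier_mat r c" and Y: "Y \<in> carrier_mat r c"
    and lim: "\<And>i j. i < r \<Longrightarrow> j < c \<Longrightarrow> (\<lambda>k. X k $$ (i,j)) \<longlonglongrightarrow> Y $$ (i,j)"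
  shows "(\<lambda>k. frob_norm (X k)) \<longlonglongrightarrow> frob_norm Y"
proof -
  have "frob_norm (X k) = sqrt (\<Sum>i<r. \<Sum>j<c. (X k $$ (i,j))\<^sup>2)" for k
    using X[of k] unfolding frob_norm_def by simp
  moreover have "frob_norm Y = sqrt (\<Sum>i<r. \<Sum>j<c. (Y $$ (i,j))\<^sup>2)"
    using Y unfolding frob_norm_def by simp
  ultimately show ?thesis by (simp only:) (intro tendsto_intros lim; simp)
qed

lemma vnorm2_L2: "vnorm2 x = L2_set (\<lambda>i. x $ i) {..<dim_vec x}"
  unfolding vnorm2_def L2_set_def scalar_prod_def
  by (simp add: power2_eq_square atLeast0LessThan)

lemma vnorm2_nonneg: "vnorm2 x \<ge> 0"
  by (simp add: vnorm2_L2)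

lemma vnorm2_sq: "(vnorm2 x)\<^sup>2 = (\<Sum>i<dim_vec x. (x $ i)\<^sup>2)"
  unfolding vnorm2_L2 L2_set_def by (simp add: sum_nonneg)

lemma vnorm2_smult: "vnorm2 (c \<cdot>\<^sub>v x) = \<bar>c\<bar> * vnorm2 x"
proof -
  have "(vnorm2 (c \<cdot>\<^sub>v x))\<^sup>2 = (\<bar>c\<bar> * vnorm2 x)\<^sup>2"
    by (simp add: vnorm2_sq power_mult_distrib sum_distrib_left)
  thus ?thesis by (rule power2_eq_imp_eq[OF _ vnorm2_nonneg]) (simp add: vnorm2_nonneg)
qed

lemma vnorm2_zero:
  assumes "x \<in> carrier_vec k" "vnorm2 x = 0"
  shows "x = 0\<^sub>v k"
proof (rule eq_vecI)
  fix i assume i: "i < dim_vec (0\<^sub>v k)"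
  have "(x $ i)\<^sup>2 \<le> (\<Sum>i<dim_vec x. (x $ i)\<^sup>2)" using i assms by (intro member_le_sum) auto
  also have "\<dots> = 0" using assms vnorm2_sq[of x] by simp
  finally show "x $ i = 0\<^sub>v k $ i" using i by simp
qed (use assms in auto)

text \<open>The Frobenius norm dominates the operator norm on each vector (Cauchy--Schwarz per row).\<close>
lemma mult_vec_frob_bound:
  assumes "x \<in> carrier_vec (dim_col A)"
  shows "vnorm2 (A *\<^sub>v x) \<le> frob_norm A * vnorm2 x"
proof -
  have row: "((A *\<^sub>v x) $ i)\<^sup>2 \<le> (\<Sum>j<dim_col A. (A $$ (i,j))\<^sup>2) * (vnorm2 x)\<^sup>2"
    if i: "i < dim_row A" for i
  proof -
    have "(A *\<^sub>v x) $ i = (\<Sum>j<dim_col A. A $$ (i,j) * x $ j)"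
      using i assms by (simp add: scalar_prod_def atLeast0LessThan)
    hence "\<bar>(A *\<^sub>v x) $ i\<bar> \<le> (\<Sum>j<dim_col A. \<bar>A $$ (i,j)\<bar> * \<bar>x $ j\<bar>)"
      by (simp add: sum_abs[THEN order_trans] abs_mult)
    also have "\<dots> \<le> L2_set (\<lambda>j. A $$ (i,j)) {..<dim_col A} * L2_set (\<lambda>j. x $ j) {..<dim_col A}"
      by (rule L2_set_mult_ineq)
    finally have "\<bar>(A *\<^sub>v x) $ i\<bar> \<le> L2_set (\<lambda>j. A $$ (i,j)) {..<dim_col A} * vnorm2 x"
      using assms by (simp add: vnorm2_L2)
    hence "\<bar>(A *\<^sub>v x) $ i\<bar>\<^sup>2 \<le> (L2_set (\<lambda>j. A $$ (i,j)) {..<dim_col A} * vnorm2 x)\<^sup>2"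
      by (rule power_mono) simp
    thus ?thesis by (simp add: power_mult_distrib L2_set_def sum_nonneg)
  qed
  have "(vnorm2 (A *\<^sub>v x))\<^sup>2 = (\<Sum>i<dim_row A. ((A *\<^sub>v x) $ i)\<^sup>2)"
    by (simp add: vnorm2_sq)
  also have "\<dots> \<le> (\<Sum>i<dim_row A. (\<Sum>j<dim_col A. (A $$ (i,j))\<^sup>2) * (vnorm2 x)\<^sup>2)"
    by (rule sum_mono) (rule row, simp)
  also have "\<dots> = (frob_norm A * vnorm2 x)\<^sup>2"
    by (simp add: frob_sq power_mult_distrib sum_distrib_right)
  finally show ?thesis
    using frob_nonneg[of A] vnorm2_nonneg[of x] by (meson mult_nonneg_nonneg power2_le_imp_le)
qed

definition unit_images :: "real mat \<Rightarrow> real set" where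
  "unit_images A = {vnorm2 (A *\<^sub>v x) | x. x \<in> carrier_vec (dim_col A) \<and> vnorm2 x = 1}"

lemma spec_norm_unit_images: "spec_norm A = Sup (unit_images A)"
  unfolding spec_norm_def unit_images_def by simp

lemma unit_images_nonempty:
  assumes "dim_col A > 0"
  shows "unit_images A \<noteq> {}"
proof -
  let ?e = "unit_vec (dim_col A) 0 :: real vec"
  have "(vnorm2 ?e)\<^sup>2 = (\<Sum>i<dim_col A. (if i = 0 then 1 else 0))"
    unfolding vnorm2_sq by (intro sum.cong) (use assms in auto)
  also have "\<dots> = 1\<^sup>2" using assms by simp
  finally have "vnorm2 ?e = 1" by (rule power2_eq_imp_eq[OF _ vnorm2_nonneg]) simp
  thus ?thesis unfolding unit_images_def using unit_vec_carrier by blast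
qed

lemma unit_images_bounded: "v \<in> unit_images A \<Longrightarrow> v \<le> frob_norm A"
  unfolding unit_images_def using mult_vec_frob_bound by fastforce

lemma spec_nonneg:
  assumes "dim_col A > 0"
  shows "spec_norm A \<ge> 0"
proof -
  obtain v where v: "v \<in> unit_images A" using unit_images_nonempty[OF assms] by auto
  have "0 \<le> v" using v vnorm2_nonneg unfolding unit_images_def by auto
  also have "v \<le> spec_norm A"
    unfolding spec_norm_unit_images using v unit_images_bounded by (intro cSup_upper bdd_aboveI)
  finally show ?thesis .
qed

text \<open>Homogeneity turns the supremum over unit vectors into \<open>\<parallel>A x\<parallel> \<le> \<parallel>A\<parallel>\<^sub>2 \<parallel>x\<parallel>\<close>.\<close>
lemma spec_bound:
  assumes "dim_col A > 0" "x \<in> carrier_vec (dim_col A)"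
  shows "vnorm2 (A *\<^sub>v x) \<le> spec_norm A * vnorm2 x"
proof (cases "vnorm2 x = 0")
  case True
  hence "x = 0\<^sub>v (dim_col A)" using vnorm2_zero assms by auto
  hence "vnorm2 (A *\<^sub>v x) = 0" by (simp add: vnorm2_def scalar_prod_def)
  thus ?thesis using True by simp
next
  case False
  let ?c = "1 / vnorm2 x"
  have pos: "vnorm2 x > 0" using False vnorm2_nonneg[of x] by auto
  have "vnorm2 (?c \<cdot>\<^sub>v x) = 1" using pos by (simp add: vnorm2_smult)
  hence "vnorm2 (A *\<^sub>v (?c \<cdot>\<^sub>v x)) \<in> unit_images A" unfolding unit_images_def using assms by auto
  hence "vnorm2 (A *\<^sub>v (?c \<cdot>\<^sub>v x)) \<le> spec_norm A"
    unfolding spec_norm_unit_images using unit_images_bounded by (intro cSup_upper bdd_aboveI)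
  hence "vnorm2 (A *\<^sub>v x) / vnorm2 x \<le> spec_norm A"
    using pos assms by (simp add: mult_mat_vec[OF carrier_matI] vnorm2_smult)
  thus ?thesis using pos by (simp add: divide_le_eq mult.commute)
qed

text \<open>The basic mixed inequality \<open>\<parallel>X Y\<parallel>\<^sub>F \<le> \<parallel>X\<parallel>\<^sub>2 \<parallel>Y\<parallel>\<^sub>F\<close>, applied column by column.\<close>
lemma frob_mult_spec:
  assumes X: "X \<in> carrier_mat r k" and Y: "Y \<in> carrier_mat k c" and k: "k > 0"
  shows "frob_norm (X * Y) \<le> spec_norm X * frob_norm Y"
proof -
  have cols: "(frob_norm M)\<^sup>2 = (\<Sum>j<dim_col M. (vnorm2 (col M j))\<^sup>2)" for M :: "real mat"
    unfolding frob_sq vnorm2_sq by (subst sum.swap) simp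
  have sX: "spec_norm X \<ge> 0" using spec_nonneg[of X] X k by simp
  have "(frob_norm (X * Y))\<^sup>2 = (\<Sum>j<c. (vnorm2 (X *\<^sub>v col Y j))\<^sup>2)"
    unfolding cols using Y by (simp add: col_mult2[OF X Y])
  also have "\<dots> \<le> (\<Sum>j<c. (spec_norm X * vnorm2 (col Y j))\<^sup>2)"
  proof (rule sum_mono)
    fix j assume "j \<in> {..<c}"
    have "vnorm2 (X *\<^sub>v col Y j) \<le> spec_norm X * vnorm2 (col Y j)"
      by (rule spec_bound) (use X Y k in \<open>auto simp: carrier_vecI\<close>)
    thus "(vnorm2 (X *\<^sub>v col Y j))\<^sup>2 \<le> (spec_norm X * vnorm2 (col Y j))\<^sup>2"
      by (rule power_mono) (rule vnorm2_nonneg)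
  qed
  also have "\<dots> = (spec_norm X)\<^sup>2 * (\<Sum>j<c. (vnorm2 (col Y j))\<^sup>2)"
    by (simp add: power_mult_distrib sum_distrib_left)
  also have "\<dots> = (spec_norm X * frob_norm Y)\<^sup>2"
    using cols[of Y] Y by (simp add: power_mult_distrib)
  finally show ?thesis
    by (rule power2_le_imp_le) (use sX frob_nonneg in simp)
qed

text \<open>Submultiplicativity of the Frobenius norm, since \<open>\<parallel>X\<parallel>\<^sub>2 \<le> \<parallel>X\<parallel>\<^sub>F\<close>.\<close>
lemma frob_mult:
  assumes X: "X \<in> carrier_mat r k" and Y: "Y \<in> carrier_mat k c" and k: "k > 0"
  shows "frob_norm (X * Y) \<le> frob_norm X * frob_norm Y"
proof -
  have "spec_norm X \<le> frob_norm X"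
    unfolding spec_norm_unit_images
    using unit_images_nonempty[of X] unit_images_bounded X k by (intro cSup_least) auto
  hence "spec_norm X * frob_norm Y \<le> frob_norm X * frob_norm Y"
    by (rule mult_right_mono) (rule frob_nonneg)
  thus ?thesis using frob_mult_spec[OF assms] by simp
qed

lemma frob_mult_transpose_spec:
  assumes Y: "Y \<in> carrier_mat r k" and X: "X \<in> carrier_mat c k" and k: "k > 0"
  shows "frob_norm (Y * transpose_mat X) \<le> spec_norm X * frob_norm Y"
proof -
  have "transpose_mat (Y * transpose_mat X) = X * transpose_mat Y"
    using transpose_mult[OF Y, of "transpose_mat X" c] X by simp
  hence "frob_norm (Y * transpose_mat X) = frob_norm (X * transpose_mat Y)"
    by (metis frob_transpose)
  also have "\<dots> \<le> spec_norm X * frob_norm (transpose_mat Y)"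
    by (rule frob_mult_spec[OF X _ k]) (use Y in simp)
  finally show ?thesis by (simp add: frob_transpose)
qed


section \<open>The signature matrix J and the form X J Y^T\<close>

definition J_sign :: "nat \<Rightarrow> nat \<Rightarrow> real" where
  "J_sign m i = (if i < m then 1 else -1)"

lemma J_sign_sq: "J_sign m i * J_sign m i = 1"
  by (simp add: J_sign_def)

lemma J_carrier: "Jmat m n \<in> carrier_mat (m+n) (m+n)"
  unfolding Jmat_def by simp

lemma J_dims [simp]: "dim_row (Jmat m n) = m+n" "dim_col (Jmat m n) = m+n"
  unfolding Jmat_def by simp_all

lemma J_index: "i < m+n \<Longrightarrow> j < m+n \<Longrightarrow> Jmat m n $$ (i,j) = (if i = j then J_sign m i else 0)"
  unfolding Jmat_def J_sign_def by auto

lemma mult_J_index: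
  assumes "X \<in> carrier_mat r (m+n)" "i < r" "j < m+n"
  shows "(X * Jmat m n) $$ (i,j) = X $$ (i,j) * J_sign m j"
proof -
  have "(X * Jmat m n) $$ (i,j) = (\<Sum>k\<in>{0..<m+n}. X $$ (i,k) * (if k = j then J_sign m k else 0))"
    using assms by (auto simp: scalar_prod_def J_index intro!: sum.cong)
  also have "\<dots> = X $$ (i,j) * J_sign m j"
    using assms(3) by (simp add: if_distrib[of "\<lambda>x. _ * x"] cong: if_cong)
  finally show ?thesis .
qed

lemma J_J: "Jmat m n * Jmat m n = 1\<^sub>m (m+n)"
  by (rule eq_matI)
    (auto simp del: index_mult_mat simp: index_mult_mat(2,3) mult_J_index[OF J_carrier] J_index J_sign_sq)

lemma J_transpose: "transpose_mat (Jmat m n) = Jmat m n"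
  by (rule eq_matI) (auto simp: J_index)

text \<open>Sign changes of columns do not change the Frobenius norm.\<close>
lemma frob_mult_J:
  assumes "X \<in> carrier_mat r (m+n)"
  shows "frob_norm (X * Jmat m n) = frob_norm X"
proof -
  have "\<And>i j. i < r \<Longrightarrow> j < m+n \<Longrightarrow> ((X * Jmat m n) $$ (i,j))\<^sup>2 = (X $$ (i,j))\<^sup>2"
    using assms by (simp del: index_mult_mat add: mult_J_index power_mult_distrib J_sign_def)
  thus ?thesis using assms unfolding frob_norm_def by simp
qed

lemma XJY_carrier:
  "X \<in> carrier_mat r (m+n) \<Longrightarrow> Y \<in> carrier_mat c (m+n) \<Longrightarrow>
   X * Jmat m n * transpose_mat Y \<in> carrier_mat r c"
  using J_carrier[of m n] by simp

lemma XJY_index: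
  assumes X: "X \<in> carrier_mat r (m+n)" and Y: "Y \<in> carrier_mat c (m+n)" and ij: "i < r" "j < c"
  shows "(X * Jmat m n * transpose_mat Y) $$ (i,j) = (\<Sum>k<m+n. X $$ (i,k) * J_sign m k * Y $$ (j,k))"
proof -
  have XJ: "X * Jmat m n \<in> carrier_mat r (m+n)" using X J_carrier[of m n] by simp
  have "(X * Jmat m n * transpose_mat Y) $$ (i,j) = row (X * Jmat m n) i \<bullet> col (transpose_mat Y) j"
    using X Y ij by simp
  also have "\<dots> = (\<Sum>k<m+n. (X * Jmat m n) $$ (i,k) * Y $$ (j,k))"
    using XJ Y ij by (auto simp: scalar_prod_def atLeast0LessThan simp del: index_mult_mat intro!: sum.cong)
  also have "\<dots> = (\<Sum>k<m+n. X $$ (i,k) * J_sign m k * Y $$ (j,k))"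
    by (rule sum.cong[OF refl]) (use X ij in \<open>simp del: index_mult_mat add: mult_J_index\<close>)
  finally show ?thesis .
qed

lemma XJX_symmetric:
  assumes X: "X \<in> carrier_mat r (m+n)"
  shows "transpose_mat (X * Jmat m n * transpose_mat X) = X * Jmat m n * transpose_mat X"
  by (rule eq_matI)
    (use XJY_carrier[OF X X] in \<open>auto simp del: index_mult_mat simp: XJY_index[OF X X] mult_ac\<close>)

lemma XJY_frob:
  assumes X: "X \<in> carrier_mat r (m+n)" and Y: "Y \<in> carrier_mat c (m+n)" and N: "m + n > 0"
  shows "frob_norm (X * Jmat m n * transpose_mat Y) \<le> frob_norm X * frob_norm Y"
proof -
  have "frob_norm (X * Jmat m n * transpose_mat Y) \<le> frob_norm (X * Jmat m n) * frob_norm (transpose_mat Y)"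
    by (rule frob_mult[OF _ _ N]) (use X Y J_carrier[of m n] in auto)
  thus ?thesis using frob_mult_J[OF X] frob_transpose[of Y] by simp
qed

lemma XJY_diff:
  assumes X: "X \<in> carrier_mat N (m+n)" and Y: "Y \<in> carrier_mat N (m+n)"
  shows "Y * Jmat m n * transpose_mat Y - X * Jmat m n * transpose_mat X
       = (Y - X) * Jmat m n * transpose_mat Y + X * Jmat m n * transpose_mat (Y - X)"
proof (rule eq_matI)
  fix i j
  assume "i < dim_row ((Y - X) * Jmat m n * transpose_mat Y + X * Jmat m n * transpose_mat (Y - X))"
    "j < dim_col ((Y - X) * Jmat m n * transpose_mat Y + X * Jmat m n * transpose_mat (Y - X))"
  hence ij: "i < N" "j < N" using X Y by auto
  have YX: "Y - X \<in> carrier_mat N (m+n)" using X Y by auto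
  have "(\<Sum>k<m+n. Y $$ (i,k) * J_sign m k * Y $$ (j,k)) - (\<Sum>k<m+n. X $$ (i,k) * J_sign m k * X $$ (j,k))
      = (\<Sum>k<m+n. (Y - X) $$ (i,k) * J_sign m k * Y $$ (j,k))
        + (\<Sum>k<m+n. X $$ (i,k) * J_sign m k * (Y - X) $$ (j,k))"
    unfolding sum.distrib[symmetric] sum_subtractf[symmetric]
    by (rule sum.cong[OF refl]) (use X Y ij in \<open>auto simp: algebra_simps\<close>)
  thus "(Y * Jmat m n * transpose_mat Y - X * Jmat m n * transpose_mat X) $$ (i,j) =
    ((Y - X) * Jmat m n * transpose_mat Y + X * Jmat m n * transpose_mat (Y - X)) $$ (i,j)"
    using ij XJY_carrier[OF X X] XJY_carrier[OF Y Y] XJY_carrier[OF YX Y] XJY_carrier[OF X YX]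
    by (simp del: index_mult_mat add: XJY_index[OF X X] XJY_index[OF Y Y] XJY_index[OF YX Y]
        XJY_index[OF X YX])
qed (use X Y in auto)

section \<open>The lower half of a matrix\<close>

text \<open>Strictly lower part plus half the diagonal: the lower triangular \<open>F\<close> with
  \<open>F + F\<^sup>T = X\<close> when \<open>X\<close> is symmetric.\<close>
definition lower_half :: "real mat \<Rightarrow> real mat" where
  "lower_half X = mat (dim_row X) (dim_col X)
     (\<lambda>(i,j). if j < i then X $$ (i,j) else if i = j then X $$ (i,j) / 2 else 0)"

lemma lower_half_carrier: "X \<in> carrier_mat r c \<Longrightarrow> lower_half X \<in> carrier_mat r c"
  unfolding lower_half_def by auto

lemma lower_half_dims [simp]:
  "dim_row (lower_half X) = dim_row X" "dim_col (lower_half X) = dim_col X"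
  unfolding lower_half_def by auto

lemma lower_half_index:
  "i < dim_row X \<Longrightarrow> j < dim_col X \<Longrightarrow>
   lower_half X $$ (i,j) = (if j < i then X $$ (i,j) else if i = j then X $$ (i,j) / 2 else 0)"
  unfolding lower_half_def by auto

lemma lower_half_lower: "lower_triangular_mat (lower_half X)"
  unfolding lower_triangular_mat_def by (auto simp: lower_half_index)

lemma lower_half_symmetric:
  assumes "X \<in> carrier_mat N N" "transpose_mat X = X"
  shows "lower_half X + transpose_mat (lower_half X) = X"
proof (rule eq_matI)
  fix i j assume ij: "i < dim_row X" "j < dim_col X"
  have "X $$ (j,i) = X $$ (i,j)"
    using arg_cong[OF assms(2), of "\<lambda>A. A $$ (i,j)"] ij assms(1) by auto
  thus "(lower_half X + transpose_mat (lower_half X)) $$ (i,j) = X $$ (i,j)"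
    using ij assms(1) by (auto simp: lower_half_index)
qed (use assms in auto)

lemma lower_half_diff:
  assumes "A \<in> carrier_mat r c" "B \<in> carrier_mat r c"
  shows "lower_half A - lower_half B = lower_half (A - B)"
  by (rule eq_matI) (use assms in \<open>auto simp: lower_half_index diff_divide_distrib\<close>)

lemma frob_lower_half: "frob_norm (lower_half X) \<le> frob_norm X"
  unfolding frob_norm_def lower_half_dims
  by (intro real_sqrt_le_mono sum_mono) (auto simp: lower_half_index power_divide)

text \<open>On symmetric matrices each off-diagonal pair is counted once and the diagonal
  quartered, which gives the factor \<open>1/\<surd>2\<close>.\<close>
lemma frob_lower_half_symmetric:
  assumes X: "X \<in> carrier_mat N N" "transpose_mat X = X"
  shows "frob_norm (lower_half X) \<le> frob_norm X / sqrt 2"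
proof -
  define l where "l = (\<lambda>i j. (lower_half X $$ (i,j))\<^sup>2)"
  have sym: "X $$ (j,i) = X $$ (i,j)" if "i < N" "j < N" for i j
    using arg_cong[OF X(2), of "\<lambda>A. A $$ (i,j)"] that X(1) by auto
  have pair: "l i j + l j i \<le> (X $$ (i,j))\<^sup>2" if "i < N" "j < N" for i j
    using that X(1) sym[OF that] by (auto simp: l_def lower_half_index power_divide)
  have "2 * (frob_norm (lower_half X))\<^sup>2 = (\<Sum>i<N. \<Sum>j<N. l i j) + (\<Sum>i<N. \<Sum>j<N. l j i)"
    unfolding frob_sq l_def using X(1) by (simp, subst (2) sum.swap, simp)
  also have "\<dots> = (\<Sum>i<N. \<Sum>j<N. l i j + l j i)" by (simp add: sum.distrib)
  also have "\<dots> \<le> (\<Sum>i<N. \<Sum>j<N. (X $$ (i,j))\<^sup>2)" by (intro sum_mono pair) auto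
  also have "\<dots> = (frob_norm X)\<^sup>2" unfolding frob_sq using X(1) by simp
  finally have "(frob_norm (lower_half X))\<^sup>2 \<le> (frob_norm X / sqrt 2)\<^sup>2" by (simp add: power_divide)
  thus ?thesis by (rule power2_le_imp_le) (simp add: frob_nonneg)
qed

lemma diag_mult_index:
  assumes "D \<in> carrier_mat N N" "diagonal_mat D" "M \<in> carrier_mat N c" "i < N" "j < c"
  shows "(D * M) $$ (i,j) = D $$ (i,i) * M $$ (i,j)"
proof -
  have "(D * M) $$ (i,j) = (\<Sum>k\<in>{0..<N}. (if i = k then D $$ (i,i) else 0) * M $$ (k,j))"
    using assms by (auto simp: scalar_prod_def diagonal_mat_def intro!: sum.cong)
  also have "\<dots> = D $$ (i,i) * M $$ (i,j)"
    using assms(4) by (simp add: if_distrib[of "\<lambda>x. x * _"] cong: if_cong)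
  finally show ?thesis .
qed

lemma diag_lower_half:
  assumes "D \<in> carrier_mat N N" "diagonal_mat D" "M \<in> carrier_mat N N"
  shows "D * lower_half M = lower_half (D * M)"
proof (rule eq_matI)
  fix i j assume "i < dim_row (lower_half (D * M))" "j < dim_col (lower_half (D * M))"
  hence ij: "i < N" "j < N" using assms by auto
  show "(D * lower_half M) $$ (i,j) = lower_half (D * M) $$ (i,j)"
    using ij assms
    by (simp del: index_mult_mat add: index_mult_mat(2,3) lower_half_index
        diag_mult_index[OF assms(1,2) lower_half_carrier[OF assms(3)] ij] diag_mult_index[OF assms(1,2,3)])
qed (use assms in auto)

section \<open>Triangular matrices, inverses and generalized Cholesky factors\<close>

lemma lower_triangular_mult:
  assumes X: "X \<in> carrier_mat N N" and Y: "Y \<in> carrier_mat N N"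
    and lX: "lower_triangular_mat X" and lY: "lower_triangular_mat Y"
  shows "lower_triangular_mat (X * Y)"
    and "\<And>i. i < N \<Longrightarrow> (X * Y) $$ (i,i) = X $$ (i,i) * Y $$ (i,i)"
proof -
  have Xz: "X $$ (i,k) = 0" if "i < k" "k < N" for i k
    using lX that X unfolding lower_triangular_mat_def by auto
  have Yz: "Y $$ (k,j) = 0" if "k < j" "j < N" for k j
    using lY that Y unfolding lower_triangular_mat_def by auto
  have ent: "(X * Y) $$ (i,j) = (\<Sum>k\<in>{0..<N}. X $$ (i,k) * Y $$ (k,j))" if "i < N" "j < N" for i j
    using that X Y by (simp add: scalar_prod_def)
  show "lower_triangular_mat (X * Y)" unfolding lower_triangular_mat_def
  proof (intro allI impI)
    fix i j assume "i < dim_row (X * Y)" "j < dim_col (X * Y)" "i < j"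
    hence ij: "i < N" "j < N" "i < j" using X Y by auto
    have "X $$ (i,k) * Y $$ (k,j) = 0" if "k < N" for k
      using Xz[of i k] Yz[of k j] ij that by (cases "k \<le> i") auto
    thus "(X * Y) $$ (i,j) = 0" using ent[of i j] ij by (simp add: sum.neutral)
  qed
  fix i assume i: "i < N"
  have "X $$ (i,k) * Y $$ (k,i) = (if k = i then X $$ (i,i) * Y $$ (i,i) else 0)" if "k < N" for k
    using Xz[of i k] Yz[of k i] i that by (cases "k < i"; cases "i < k") auto
  hence "(\<Sum>k\<in>{0..<N}. X $$ (i,k) * Y $$ (k,i)) = (\<Sum>k\<in>{0..<N}. if k = i then X $$ (i,i) * Y $$ (i,i) else 0)"
    by (intro sum.cong) auto
  thus "(X * Y) $$ (i,i) = X $$ (i,i) * Y $$ (i,i)" using ent[OF i i] i by simp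
qed

lemma inv_mat_props:
  assumes A: "A \<in> carrier_mat N N" and inv: "invertible_mat A"
  shows "inv_mat A \<in> carrier_mat N N" "A * inv_mat A = 1\<^sub>m N" "inv_mat A * A = 1\<^sub>m N"
proof -
  have "\<exists>B. inverts_mat A B \<and> inverts_mat B A" using inv unfolding invertible_mat_def by auto
  hence "inverts_mat A (inv_mat A) \<and> inverts_mat (inv_mat A) A"
    unfolding inv_mat_def by (rule someI_ex)
  hence AB: "A * inv_mat A = 1\<^sub>m N" and BA: "inv_mat A * A = 1\<^sub>m (dim_row (inv_mat A))"
    unfolding inverts_mat_def using A by auto
  have "dim_col (inv_mat A) = N" using arg_cong[OF AB, of dim_col] by simp
  moreover have "dim_row (inv_mat A) = N" using arg_cong[OF BA, of dim_col] A by simp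
  ultimately show "inv_mat A \<in> carrier_mat N N" "A * inv_mat A = 1\<^sub>m N" "inv_mat A * A = 1\<^sub>m N"
    using AB BA by auto
qed

lemma inv_mat_unique:
  assumes A: "A \<in> carrier_mat N N" and B: "B \<in> carrier_mat N N"
    and AB: "A * B = 1\<^sub>m N" and BA: "B * A = 1\<^sub>m N"
  shows "inv_mat A = B"
proof -
  have "invertible_mat A" unfolding invertible_mat_def inverts_mat_def
    using A B AB BA by (auto intro!: exI[of _ B])
  note p = inv_mat_props[OF A this]
  have "inv_mat A = inv_mat A * (A * B)" using AB p(1) by simp
  also have "\<dots> = (inv_mat A * A) * B" using p(1) A B by (simp add: assoc_mult_mat)
  also have "\<dots> = B" using p(3) B by simp
  finally show ?thesis .
qed

lemma lower_triangular_invertible_iff: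
  assumes X: "X \<in> carrier_mat N N" and l: "lower_triangular_mat X"
  shows "invertible_mat X \<longleftrightarrow> (\<forall>i<N. X $$ (i,i) \<noteq> 0)"
proof -
  have det: "det X = (\<Prod>i=0..<N. X $$ (i,i))"
    using det_lower_triangular[OF _ X] l X by (auto simp: lower_triangular_mat_def prod_list_diag_prod)
  have "invertible_mat X \<longleftrightarrow> det X \<noteq> 0"
  proof
    assume "invertible_mat X"
    note p = inv_mat_props[OF X this]
    have "det (inv_mat X) * det X = 1" using det_mult[OF p(1) X] p(3) by simp
    thus "det X \<noteq> 0" by auto
  next
    assume "det X \<noteq> 0"
    then obtain B where "B \<in> carrier_mat N N" "B * X = 1\<^sub>m N" "X * B = 1\<^sub>m N"
      using det_non_zero_imp_unit[OF X] unfolding Units_def ring_mat_def by auto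
    thus "invertible_mat X" unfolding invertible_mat_def inverts_mat_def using X by auto
  qed
  thus ?thesis unfolding det by auto
qed

text \<open>Generalized Cholesky factors are exactly the lower triangular nonsingular \<open>L\<close>
  with \<open>M = L J L\<^sup>T\<close>: the block structure is automatic.\<close>
lemma gen_chol_factor_iff:
  "gen_chol_factor m n M L \<longleftrightarrow>
     L \<in> carrier_mat (m+n) (m+n) \<and> lower_triangular_mat L \<and> (\<forall>i<m+n. L $$ (i,i) \<noteq> 0) \<and>
     M = L * Jmat m n * transpose_mat L"
proof
  assume "gen_chol_factor m n M L"
  then obtain L11 L21 L22 where b: "L11 \<in> carrier_mat m m" "L21 \<in> carrier_mat n m"
      "L22 \<in> carrier_mat n n" "lower_triangular_mat L11" "invertible_mat L11"
      "lower_triangular_mat L22" "invertible_mat L22" "L = four_block_mat L11 (0\<^sub>m m n) L21 L22"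
    and M: "M = L * Jmat m n * transpose_mat L"
    unfolding gen_chol_factor_def by blast
  have d1: "\<forall>i<m. L11 $$ (i,i) \<noteq> 0" and d2: "\<forall>i<n. L22 $$ (i,i) \<noteq> 0"
    using lower_triangular_invertible_iff[OF b(1,4)] lower_triangular_invertible_iff[OF b(3,6)] b(5,7)
    by auto
  have "lower_triangular_mat L"
    using b(1-4,6,8) by (auto simp: lower_triangular_mat_def)
  moreover have "L $$ (i,i) \<noteq> 0" if "i < m+n" for i
    using d1 d2[rule_format, of "i - m"] b(1,3,8) that by (cases "i < m") auto
  ultimately show "L \<in> carrier_mat (m+n) (m+n) \<and> lower_triangular_mat L \<and>
      (\<forall>i<m+n. L $$ (i,i) \<noteq> 0) \<and> M = L * Jmat m n * transpose_mat L"
    using b M by auto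
next
  assume "L \<in> carrier_mat (m+n) (m+n) \<and> lower_triangular_mat L \<and> (\<forall>i<m+n. L $$ (i,i) \<noteq> 0) \<and>
     M = L * Jmat m n * transpose_mat L"
  hence L: "L \<in> carrier_mat (m+n) (m+n)" and d: "\<forall>i<m+n. L $$ (i,i) \<noteq> 0"
    and M: "M = L * Jmat m n * transpose_mat L"
    and lz: "\<And>i j. i < j \<Longrightarrow> j < m+n \<Longrightarrow> L $$ (i,j) = 0"
    unfolding lower_triangular_mat_def by auto
  define L11 where "L11 = mat m m (\<lambda>(i,j). L $$ (i,j))"
  define L21 where "L21 = mat n m (\<lambda>(i,j). L $$ (i+m,j))"
  define L22 where "L22 = mat n n (\<lambda>(i,j). L $$ (i+m,j+m))"
  have c: "L11 \<in> carrier_mat m m" "L21 \<in> carrier_mat n m" "L22 \<in> carrier_mat n n"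
    unfolding L11_def L21_def L22_def by auto
  have l11: "lower_triangular_mat L11" and l22: "lower_triangular_mat L22"
    unfolding lower_triangular_mat_def L11_def L22_def using lz by auto
  have "invertible_mat L11" "invertible_mat L22"
    using lower_triangular_invertible_iff[OF c(1) l11] lower_triangular_invertible_iff[OF c(3) l22] d
    unfolding L11_def L22_def by auto
  moreover have "L = four_block_mat L11 (0\<^sub>m m n) L21 L22"
    by (rule eq_matI) (use L c lz in \<open>auto simp: L11_def L21_def L22_def\<close>)
  ultimately show "gen_chol_factor m n M L"
    unfolding gen_chol_factor_def using c l11 l22 M by blast
qed


section \<open>The fixed-point map and its fixed point\<close>

text \<open>A lower triangular \<open>F\<close> solves \<open>F + F\<^sup>T = E - F J F\<^sup>T\<close> iff it is a fixed point of this map.\<close>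
definition chol_map :: "nat \<Rightarrow> nat \<Rightarrow> real mat \<Rightarrow> real mat \<Rightarrow> real mat" where
  "chol_map m n E X = lower_half (E - X * Jmat m n * transpose_mat X)"

lemma chol_map_carrier:
  "E \<in> carrier_mat (m+n) (m+n) \<Longrightarrow> X \<in> carrier_mat (m+n) (m+n) \<Longrightarrow>
   chol_map m n E X \<in> carrier_mat (m+n) (m+n)"
  unfolding chol_map_def using J_carrier[of m n] by (intro lower_half_carrier) auto

lemma chol_map_arg_symmetric:
  assumes E: "E \<in> carrier_mat (m+n) (m+n)" "transpose_mat E = E"
    and X: "X \<in> carrier_mat (m+n) (m+n)"
  shows "transpose_mat (E - X * Jmat m n * transpose_mat X) = E - X * Jmat m n * transpose_mat X"
  using transpose_minus[OF E(1) XJY_carrier[OF X X]] E XJX_symmetric[OF X] by simp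

lemma chol_map_index:
  assumes E: "E \<in> carrier_mat (m+n) (m+n)" and X: "X \<in> carrier_mat (m+n) (m+n)"
    and ij: "i < m+n" "j < m+n"
  shows "chol_map m n E X $$ (i,j) =
    (let h = E $$ (i,j) - (\<Sum>k<m+n. X $$ (i,k) * J_sign m k * X $$ (j,k))
     in if j < i then h else if i = j then h / 2 else 0)"
  using E ij XJY_carrier[OF X X]
  by (simp del: index_mult_mat add: chol_map_def lower_half_index XJY_index[OF X X] Let_def)

lemma chol_map_bound:
  assumes E: "E \<in> carrier_mat (m+n) (m+n)" "transpose_mat E = E"
    and X: "X \<in> carrier_mat (m+n) (m+n)" and N: "m + n > 0"
  shows "frob_norm (chol_map m n E X) \<le> (frob_norm E + (frob_norm X)\<^sup>2) / sqrt 2"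
proof -
  have "frob_norm (chol_map m n E X) \<le> frob_norm (E - X * Jmat m n * transpose_mat X) / sqrt 2"
    unfolding chol_map_def
    by (rule frob_lower_half_symmetric[OF _ chol_map_arg_symmetric[OF E X]])
      (use E X XJY_carrier[OF X X] in auto)
  moreover have "frob_norm (E - X * Jmat m n * transpose_mat X) \<le> frob_norm E + (frob_norm X)\<^sup>2"
    using frob_diff[OF E(1) XJY_carrier[OF X X]] XJY_frob[OF X X N] by (simp add: power2_eq_square)
  ultimately show ?thesis by (meson divide_right_mono order_trans real_sqrt_ge_zero zero_le_numeral)
qed

lemma chol_map_lipschitz:
  assumes E: "E \<in> carrier_mat (m+n) (m+n)"
    and X: "X \<in> carrier_mat (m+n) (m+n)" and Y: "Y \<in> carrier_mat (m+n) (m+n)"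
    and N: "m + n > 0"
  shows "frob_norm (chol_map m n E Y - chol_map m n E X)
         \<le> (frob_norm X + frob_norm Y) * frob_norm (Y - X) / sqrt 2"
proof -
  let ?Q = "\<lambda>Z. Z * Jmat m n * transpose_mat Z"
  have QX: "?Q X \<in> carrier_mat (m+n) (m+n)" and QY: "?Q Y \<in> carrier_mat (m+n) (m+n)"
    using XJY_carrier[OF X X] XJY_carrier[OF Y Y] .
  have YX: "Y - X \<in> carrier_mat (m+n) (m+n)" using X Y by auto
  have "chol_map m n E Y - chol_map m n E X = lower_half (?Q X - ?Q Y)"
    unfolding chol_map_def lower_half_diff[OF minus_carrier_mat[OF QY] minus_carrier_mat[OF QX]]
    by (rule arg_cong[where f = lower_half], rule eq_matI)
      (use E X Y QX QY in \<open>auto simp del: index_mult_mat\<close>)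
  moreover have "transpose_mat (?Q X - ?Q Y) = ?Q X - ?Q Y"
    using transpose_minus[OF QX QY] XJX_symmetric[OF X] XJX_symmetric[OF Y] by simp
  moreover have "- (?Q Y - ?Q X) = ?Q X - ?Q Y"
    by (rule eq_matI) (use QX QY in \<open>auto simp del: index_mult_mat\<close>)
  ultimately have "frob_norm (chol_map m n E Y - chol_map m n E X) \<le> frob_norm (?Q Y - ?Q X) / sqrt 2"
    using frob_lower_half_symmetric[OF minus_carrier_mat[OF QY, of "?Q X"]] frob_uminus by metis
  moreover have "frob_norm (?Q Y - ?Q X)
      \<le> frob_norm ((Y - X) * Jmat m n * transpose_mat Y) + frob_norm (X * Jmat m n * transpose_mat (Y - X))"
    unfolding XJY_diff[OF X Y] by (rule frob_add) (use XJY_carrier[OF YX Y] XJY_carrier[OF X YX] in auto)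
  moreover have "\<dots> \<le> (frob_norm X + frob_norm Y) * frob_norm (Y - X)"
    using XJY_frob[OF YX Y N] XJY_frob[OF X YX N] by (simp add: algebra_simps)
  ultimately show ?thesis by (smt (verit) divide_right_mono real_sqrt_ge_zero)
qed

text \<open>Entrywise continuity of \<open>\<Phi>\<close>, needed to pass to the limit of the iteration.\<close>
lemma chol_map_tendsto:
  assumes E: "E \<in> carrier_mat (m+n) (m+n)"
    and X: "\<And>k. X k \<in> carrier_mat (m+n) (m+n)" and F: "F \<in> carrier_mat (m+n) (m+n)"
    and lim: "\<And>i j. i < m+n \<Longrightarrow> j < m+n \<Longrightarrow> (\<lambda>k. X k $$ (i,j)) \<longlonglongrightarrow> F $$ (i,j)"
    and ij: "i < m+n" "j < m+n"
  shows "(\<lambda>k. chol_map m n E (X k) $$ (i,j)) \<longlonglongrightarrow> chol_map m n E F $$ (i,j)"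
proof -
  have "(\<lambda>k. E $$ (i,j) - (\<Sum>l<m+n. X k $$ (i,l) * J_sign m l * X k $$ (j,l)))
     \<longlonglongrightarrow> E $$ (i,j) - (\<Sum>l<m+n. F $$ (i,l) * J_sign m l * F $$ (j,l))"
    by (intro tendsto_intros lim ij) auto
  thus ?thesis
    unfolding chol_map_index[OF E X ij] chol_map_index[OF E F ij] Let_def
    by (cases "j < i"; cases "i = j") (auto intro: tendsto_divide)
qed

lemma mat_seq_geometric_limit:
  fixes X :: "nat \<Rightarrow> real mat"
  assumes X: "\<And>k. X k \<in> carrier_mat r c" and q: "0 \<le> q" "q < 1"
    and step: "\<And>k. frob_norm (X (Suc k) - X k) \<le> q ^ k * b"
  obtains Y where "Y \<in> carrier_mat r c"
    and "\<And>i j. i < r \<Longrightarrow> j < c \<Longrightarrow> (\<lambda>k. X k $$ (i,j)) \<longlonglongrightarrow> Y $$ (i,j)"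
proof -
  have conv: "convergent (\<lambda>k. X k $$ (i,j))" if ij: "i < r" "j < c" for i j
  proof -
    define a where "a = (\<lambda>k. X k $$ (i,j))"
    have "\<bar>a (Suc k) - a k\<bar> \<le> q ^ k * b" for k
    proof -
      have "a (Suc k) - a k = (X (Suc k) - X k) $$ (i,j)"
        unfolding a_def using X[of k] X[of "Suc k"] ij by simp
      also have "\<bar>\<dots>\<bar> \<le> frob_norm (X (Suc k) - X k)" by (rule frob_entry) (use X[of k] ij in auto)
      finally show ?thesis using step[of k] by simp
    qed
    moreover have "summable (\<lambda>k. q ^ k * b)" using q by (intro summable_mult2 summable_geometric) auto
    ultimately have "summable (\<lambda>k. a (Suc k) - a k)"
      by (intro summable_comparison_test[of "\<lambda>k. a (Suc k) - a k" "\<lambda>k. q ^ k * b"]) auto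
    hence "(\<lambda>l. a l - a 0) \<longlonglongrightarrow> (\<Sum>k. a (Suc k) - a k)"
      using summable_LIMSEQ by (fastforce simp: sum_lessThan_telescope)
    hence "(\<lambda>l. a l - a 0 + a 0) \<longlonglongrightarrow> (\<Sum>k. a (Suc k) - a k) + a 0" by (intro tendsto_intros)
    thus ?thesis unfolding a_def convergent_def by auto
  qed
  define Y where "Y = mat r c (\<lambda>(i,j). lim (\<lambda>k. X k $$ (i,j)))"
  show ?thesis
    by (rule that[of Y]) (use conv in \<open>auto simp: Y_def convergent_LIMSEQ_iff\<close>)
qed

text \<open>The radius \<open>g = (1 - \<surd>(1 - 2t))/\<surd>2\<close> is the small root of \<open>g = (t + g\<^sup>2)/\<surd>2\<close>;
  on the ball of radius \<open>g\<close> the Lipschitz constant \<open>\<surd>2 g\<close> of \<open>\<Phi>\<close> is below 1.\<close>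
lemma fixpoint_radius:
  assumes t: "0 \<le> t" "t < 1/2"
  defines "g \<equiv> (1 - sqrt (1 - 2*t)) / sqrt 2"
  shows "0 \<le> g" "sqrt 2 * g < 1" "(t + g\<^sup>2) / sqrt 2 = g" "g < 1"
proof -
  define r where "r = sqrt (1 - 2*t)"
  have r: "0 < r" "r \<le> 1" "r\<^sup>2 = 1 - 2*t" using t unfolding r_def by simp_all
  have gs: "sqrt 2 * g = 1 - r" unfolding g_def r_def by simp
  show "0 \<le> g" unfolding g_def using r(2) unfolding r_def by simp
  show "sqrt 2 * g < 1" using gs r(1) by simp
  have "2 * g\<^sup>2 = (1 - r)\<^sup>2"
    using gs by (metis power2_eq_square power_mult_distrib real_sqrt_pow2 zero_le_numeral)
  hence "t + g\<^sup>2 = sqrt 2 * g" using gs r(3) by (simp add: power2_eq_square algebra_simps)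
  thus "(t + g\<^sup>2) / sqrt 2 = g" by simp
  have "sqrt 2 > (1::real)" by simp
  thus "g < 1" using \<open>sqrt 2 * g < 1\<close> \<open>0 \<le> g\<close> by (smt (verit) mult_le_cancel_right1)
qed

lemma chol_map_fixpoint:
  assumes E: "E \<in> carrier_mat (m+n) (m+n)" "transpose_mat E = E"
    and N: "m + n > 0" and t: "frob_norm E \<le> t" "t < 1/2"
  obtains F where "F \<in> carrier_mat (m+n) (m+n)" "chol_map m n E F = F"
    "frob_norm F \<le> (1 - sqrt (1 - 2*t)) / sqrt 2"
proof -
  define g where "g = (1 - sqrt (1 - 2*t)) / sqrt 2"
  note g = fixpoint_radius[OF order_trans[OF frob_nonneg t(1)] t(2), folded g_def]
  define Fs where "Fs = (\<lambda>k. (chol_map m n E ^^ k) (0\<^sub>m (m+n) (m+n)))"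
  have Fs_Suc: "Fs (Suc k) = chol_map m n E (Fs k)" for k unfolding Fs_def by simp
  have ball: "Fs k \<in> carrier_mat (m+n) (m+n) \<and> frob_norm (Fs k) \<le> g" for k
  proof (induction k)
    case 0
    show ?case using g(1) by (simp add: Fs_def frob_norm_def)
  next
    case (Suc k)
    have "frob_norm (Fs (Suc k)) \<le> (frob_norm E + (frob_norm (Fs k))\<^sup>2) / sqrt 2"
      unfolding Fs_Suc using Suc chol_map_bound[OF E _ N] by blast
    also have "\<dots> \<le> (t + g\<^sup>2) / sqrt 2"
      using t(1) Suc by (intro divide_right_mono add_mono power_mono frob_nonneg) auto
    finally show ?case using g(3) chol_map_carrier[OF E(1)] Suc Fs_Suc by simp
  qed
  hence Fc: "\<And>k. Fs k \<in> carrier_mat (m+n) (m+n)" and Fb: "\<And>k. frob_norm (Fs k) \<le> g" by auto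
  have contraction: "frob_norm (Fs (Suc k) - Fs k) \<le> (sqrt 2 * g) ^ k * frob_norm (Fs 1 - Fs 0)" for k
  proof (induction k)
    case (Suc k)
    have "frob_norm (Fs (Suc (Suc k)) - Fs (Suc k))
        \<le> (frob_norm (Fs k) + frob_norm (Fs (Suc k))) * frob_norm (Fs (Suc k) - Fs k) / sqrt 2"
      unfolding Fs_Suc[of "Suc k"] Fs_Suc[of k] using chol_map_lipschitz[OF E(1) Fc[of k] Fc[of "Suc k"] N]
      by (simp add: Fs_Suc)
    also have "\<dots> \<le> (g + g) * frob_norm (Fs (Suc k) - Fs k) / sqrt 2"
      using Fb[of k] Fb[of "Suc k"] by (intro divide_right_mono mult_right_mono frob_nonneg add_mono) auto
    also have "\<dots> = sqrt 2 * g * frob_norm (Fs (Suc k) - Fs k)"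
      by (simp add: field_simps real_sqrt_mult[symmetric])
    also have "\<dots> \<le> sqrt 2 * g * ((sqrt 2 * g) ^ k * frob_norm (Fs 1 - Fs 0))"
      using Suc g(1) by (intro mult_left_mono) auto
    finally show ?case by simp
  qed simp
  obtain F where F: "F \<in> carrier_mat (m+n) (m+n)"
    and lim: "\<And>i j. i < m+n \<Longrightarrow> j < m+n \<Longrightarrow> (\<lambda>k. Fs k $$ (i,j)) \<longlonglongrightarrow> F $$ (i,j)"
    using mat_seq_geometric_limit[OF Fc _ g(2) contraction] g(1) by auto
  have "frob_norm F \<le> g"
    using Fb by (intro LIMSEQ_le_const2[OF frob_tendsto[OF Fc F lim]]) auto
  moreover have "chol_map m n E F = F"
  proof (rule eq_matI)
    fix i j assume "i < dim_row F" "j < dim_col F"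
    hence ij: "i < m+n" "j < m+n" using F by auto
    have "(\<lambda>k. Fs (Suc k) $$ (i,j)) \<longlonglongrightarrow> chol_map m n E F $$ (i,j)"
      unfolding Fs_Suc by (rule chol_map_tendsto[OF E(1) Fc F lim ij])
    moreover have "(\<lambda>k. Fs (Suc k) $$ (i,j)) \<longlonglongrightarrow> F $$ (i,j)"
      using lim[OF ij] by (rule LIMSEQ_Suc)
    ultimately show "chol_map m n E F $$ (i,j) = F $$ (i,j)" by (rule LIMSEQ_unique)
  qed (use chol_map_carrier[OF E(1) F] F in auto)
  ultimately show ?thesis using that F unfolding g_def by blast
qed


section \<open>From the fixed point to the perturbed factor\<close>

text \<open>Associativity and closure for square matrices of a fixed size \<open>N\<close>; instantiated with \<open>N\<close>
  they work as conditional simplification rules.\<close>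
lemma mult_assoc_sq:
  "A \<in> carrier_mat N N \<Longrightarrow> B \<in> carrier_mat N N \<Longrightarrow> C \<in> carrier_mat N N \<Longrightarrow> A * B * C = A * (B * C)"
  by (rule assoc_mult_mat)

lemma mult_carrier_sq: "A \<in> carrier_mat N N \<Longrightarrow> B \<in> carrier_mat N N \<Longrightarrow> A * B \<in> carrier_mat N N"
  by simp

lemma transpose_carrier_sq: "A \<in> carrier_mat N N \<Longrightarrow> transpose_mat A \<in> carrier_mat N N"
  by simp

lemma frob_sandwich:
  assumes X: "X \<in> carrier_mat N N" and Y: "Y \<in> carrier_mat N N" and M: "M \<in> carrier_mat N N"
    and N: "N > 0"
  shows "frob_norm (X * M * transpose_mat Y) \<le> spec_norm X * spec_norm Y * frob_norm M"
proof -
  have "X * M * transpose_mat Y = X * (M * transpose_mat Y)"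
    using X M Y by (intro assoc_mult_mat) auto
  hence "frob_norm (X * M * transpose_mat Y) \<le> spec_norm X * frob_norm (M * transpose_mat Y)"
    using frob_mult_spec[OF X _ N, of "M * transpose_mat Y" N] M Y by simp
  also have "\<dots> \<le> spec_norm X * (spec_norm Y * frob_norm M)"
    using frob_mult_transpose_spec[OF M Y N] spec_nonneg[of X] X N by (intro mult_left_mono) auto
  finally show ?thesis by (simp add: mult.assoc)
qed

lemma transpose_sandwich_symmetric:
  assumes X: "X \<in> carrier_mat N N" and M: "M \<in> carrier_mat N N" "transpose_mat M = (M :: real mat)"
  shows "transpose_mat (X * M * transpose_mat X) = X * M * transpose_mat X"
proof -
  have "transpose_mat (X * M * transpose_mat X) = transpose_mat (transpose_mat X) * transpose_mat (X * M)"
    by (rule transpose_mult) (use X M in auto)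
  also have "transpose_mat (X * M) = transpose_mat M * transpose_mat X"
    by (rule transpose_mult) (use X M in auto)
  finally show ?thesis using X M by simp
qed

text \<open>Indeed \<open>(I + F J) J = J + F\<close>, and the product expands to \<open>J + F + F\<^sup>T + F J F\<^sup>T\<close>.\<close>
lemma fixpoint_factor_identity:
  assumes E: "E \<in> carrier_mat (m+n) (m+n)" "transpose_mat E = E"
    and F: "F \<in> carrier_mat (m+n) (m+n)" and fx: "chol_map m n E F = F"
  shows "(1\<^sub>m (m+n) + F * Jmat m n) * Jmat m n * transpose_mat (1\<^sub>m (m+n) + F * Jmat m n)
         = Jmat m n + E"
proof -
  let ?J = "Jmat m n" and ?N = "m + n"
  define P where "P = 1\<^sub>m ?N + F * ?J"
  have Jc: "?J \<in> carrier_mat ?N ?N" by (rule J_carrier)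
  have FJ: "F * ?J \<in> carrier_mat ?N ?N" and FT: "transpose_mat F \<in> carrier_mat ?N ?N"
    using F Jc by auto
  have Pc: "P \<in> carrier_mat ?N ?N" unfolding P_def using FJ by simp
  have "P * ?J = 1\<^sub>m ?N * ?J + F * ?J * ?J"
    unfolding P_def by (rule add_mult_distrib_mat[OF one_carrier_mat FJ Jc])
  also have "\<dots> = ?J + F"
    using F Jc by (simp add: mult_assoc_sq J_J del: assoc_mult_mat)
  finally have PJ: "P * ?J = ?J + F" .
  have PT: "transpose_mat P = 1\<^sub>m ?N + ?J * transpose_mat F"
    unfolding P_def using transpose_add[OF one_carrier_mat FJ] transpose_mult[OF F Jc] J_transpose[of m n]
    by simp
  have JF: "?J + F \<in> carrier_mat ?N ?N" and JFT: "?J * transpose_mat F \<in> carrier_mat ?N ?N"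
    using F Jc by auto
  have "P * ?J * transpose_mat P = (?J + F) * (1\<^sub>m ?N + ?J * transpose_mat F)" unfolding PJ PT ..
  also have "\<dots> = (?J + F) + (?J * (?J * transpose_mat F) + F * (?J * transpose_mat F))"
    using mult_add_distrib_mat[OF JF one_carrier_mat JFT] add_mult_distrib_mat[OF Jc F JFT]
      right_mult_one_mat[OF JF] by simp
  also have "?J * (?J * transpose_mat F) = transpose_mat F"
    using assoc_mult_mat[OF Jc Jc FT, symmetric] J_J[of m n] FT by simp
  also have "F * (?J * transpose_mat F) = F * ?J * transpose_mat F"
    using assoc_mult_mat[OF F Jc FT] by simp
  finally have expand: "P * ?J * transpose_mat P = ?J + F + (transpose_mat F + F * ?J * transpose_mat F)" .
  define M where "M = E - F * ?J * transpose_mat F"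
  have Mc: "M \<in> carrier_mat ?N ?N" unfolding M_def using XJY_carrier[OF F F] by (rule minus_carrier_mat)
  have hs: "F + transpose_mat F = M"
    using fx lower_half_symmetric[OF Mc] chol_map_arg_symmetric[OF E F]
    unfolding chol_map_def M_def by metis
  have sum: "F $$ (i,j) + (F $$ (j,i) + (F * ?J * transpose_mat F) $$ (i,j)) = E $$ (i,j)"
    if "i < ?N" "j < ?N" for i j
    using arg_cong[OF hs, of "\<lambda>A. A $$ (i,j)"] that F E XJY_carrier[OF F F]
    unfolding M_def by (simp del: index_mult_mat add: algebra_simps)
  show ?thesis unfolding P_def[symmetric] expand
    by (rule eq_matI) (use F E XJY_carrier[OF F F] sum in \<open>auto simp del: index_mult_mat\<close>)
qed

text \<open>If \<open>F\<close> is lower triangular with \<open>\<parallel>F\<parallel>\<^sub>F < 1\<close>, then \<open>I + F J\<close> is lower triangular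
  with nonzero diagonal (its diagonal entries are \<open>1 \<plusminus> F\<^sub>i\<^sub>i\<close>).\<close>
lemma identity_plus_FJ_lower:
  assumes F: "F \<in> carrier_mat (m+n) (m+n)" and Flow: "lower_triangular_mat F"
    and Fb: "frob_norm F < 1"
  shows "lower_triangular_mat (1\<^sub>m (m+n) + F * Jmat m n)"
    and "\<And>i. i < m+n \<Longrightarrow> (1\<^sub>m (m+n) + F * Jmat m n) $$ (i,i) \<noteq> 0"
proof -
  let ?P = "1\<^sub>m (m+n) + F * Jmat m n"
  have P: "?P $$ (i,j) = (if i = j then 1 else 0) + F $$ (i,j) * J_sign m j"
    if "i < m+n" "j < m+n" for i j
    using that F mult_carrier_mat[OF F J_carrier[of m n]]
    by (simp del: index_mult_mat add: mult_J_index[OF F])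
  show "lower_triangular_mat ?P"
    using Flow F P unfolding lower_triangular_mat_def by auto
  fix i assume i: "i < m+n"
  have "\<bar>F $$ (i,i)\<bar> < 1" using frob_entry[of i F i] F i Fb by auto
  thus "?P $$ (i,i) \<noteq> 0" using P[OF i i] by (auto simp: J_sign_def)
qed

text \<open>Conjugating by \<open>L\<close> transports the identity to the original coordinates.\<close>
lemma congruence_mult:
  assumes L: "L \<in> carrier_mat N N" and P: "P \<in> carrier_mat N N" and M: "(M :: real mat) \<in> carrier_mat N N"
  shows "(L * P) * M * transpose_mat (L * P) = L * (P * M * transpose_mat P) * transpose_mat L"
  using L P M
  by (simp add: transpose_mult[OF L P] mult_assoc_sq[of _ N] mult_carrier_sq[of _ N]
      transpose_carrier_sq[of _ N] del: assoc_mult_mat mult_carrier_mat transpose_carrier_mat)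

lemma congruence_inverse:
  assumes L: "L \<in> carrier_mat N N" and Li: "Li \<in> carrier_mat N N" "L * Li = 1\<^sub>m N"
    and M: "(M :: real mat) \<in> carrier_mat N N"
  shows "L * (Li * M * transpose_mat Li) * transpose_mat L = M"
proof -
  have "transpose_mat Li * transpose_mat L = 1\<^sub>m N"
    using transpose_mult[OF L Li(1)] Li(2) by simp
  moreover have "L * (Li * M * transpose_mat Li) * transpose_mat L
      = (L * Li) * M * (transpose_mat Li * transpose_mat L)"
    using L Li(1) M
    by (simp add: mult_assoc_sq[of _ N] mult_carrier_sq[of _ N] transpose_carrier_sq[of _ N]
        del: assoc_mult_mat mult_carrier_mat transpose_carrier_mat)
  ultimately show ?thesis using Li(2) M by simp
qed

lemma perturbed_gen_chol_factor:
  assumes L: "gen_chol_factor m n K L"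
    and Li: "Li \<in> carrier_mat (m+n) (m+n)" "L * Li = 1\<^sub>m (m+n)"
    and dK: "\<Delta>K \<in> carrier_mat (m+n) (m+n)" "transpose_mat \<Delta>K = \<Delta>K"
    and E: "E = Li * \<Delta>K * transpose_mat Li"
    and F: "F \<in> carrier_mat (m+n) (m+n)" and fx: "chol_map m n E F = F" and Fb: "frob_norm F < 1"
  shows "gen_chol_factor m n (K + \<Delta>K) (L * (1\<^sub>m (m+n) + F * Jmat m n))"
proof -
  let ?J = "Jmat m n" and ?P = "1\<^sub>m (m+n) + F * Jmat m n"
  have Lc: "L \<in> carrier_mat (m+n) (m+n)" and Llow: "lower_triangular_mat L"
    and Ldiag: "\<forall>i<m+n. L $$ (i,i) \<noteq> 0" and K: "K = L * ?J * transpose_mat L"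
    using L unfolding gen_chol_factor_iff by auto
  have Pc: "?P \<in> carrier_mat (m+n) (m+n)" using F J_carrier[of m n] by simp
  have Ec: "E \<in> carrier_mat (m+n) (m+n)" and Es: "transpose_mat E = E"
    using transpose_sandwich_symmetric[OF Li(1) dK] E Li(1) dK(1) by auto
  have Flow: "lower_triangular_mat F" using fx lower_half_lower unfolding chol_map_def by metis
  note Plow = identity_plus_FJ_lower[OF F Flow Fb]
  note LP = lower_triangular_mult[OF Lc Pc Llow Plow(1)]
  have "(L * ?P) * ?J * transpose_mat (L * ?P) = L * (?J + E) * transpose_mat L"
    unfolding congruence_mult[OF Lc Pc J_carrier] fixpoint_factor_identity[OF Ec Es F fx] ..
  also have "\<dots> = K + \<Delta>K"
    unfolding K congruence_inverse[OF Lc Li dK(1), folded E, symmetric]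
    using Lc Ec dK(1) J_carrier[of m n]
    by (simp add: mult_add_distrib_mat[of _ "m+n" "m+n"] add_mult_distrib_mat[of _ "m+n" "m+n"])
  finally show ?thesis
    unfolding gen_chol_factor_iff using Lc Pc LP Ldiag Plow(2) by simp
qed


section \<open>Diagonal scaling and the norm bound\<close>

text \<open>A positive diagonal matrix is invertible (its inverse is diagonal), and \<open>I\<close> is one of them,
  so the infimum over \<open>\<bbbD>\<^sub>N\<close> is over a nonempty set.\<close>
lemma pos_diag_inv:
  assumes D: "D \<in> pos_diag_mats N"
  shows "inv_mat D \<in> carrier_mat N N" "D * inv_mat D = 1\<^sub>m N" "inv_mat D * D = 1\<^sub>m N"
proof -
  have Dc: "D \<in> carrier_mat N N" and Dd: "diagonal_mat D" and Dp: "\<And>i. i < N \<Longrightarrow> D $$ (i,i) > 0"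
    using D unfolding pos_diag_mats_def by auto
  define Di where "Di = mat N N (\<lambda>(i,j). if i = j then 1 / D $$ (i,i) else 0)"
  have Dic: "Di \<in> carrier_mat N N" and Did: "diagonal_mat Di"
    unfolding Di_def diagonal_mat_def by auto
  have D0: "D $$ (i,j) = 0" if "i < N" "j < N" "i \<noteq> j" for i j
    using Dd Dc that unfolding diagonal_mat_def by auto
  have DDi: "D * Di = 1\<^sub>m N"
  proof (rule eq_matI)
    fix i j assume "i < dim_row (1\<^sub>m N :: real mat)" "j < dim_col (1\<^sub>m N :: real mat)"
    hence ij: "i < N" "j < N" by auto
    show "(D * Di) $$ (i,j) = 1\<^sub>m N $$ (i,j)"
      using diag_mult_index[OF Dc Dd Dic ij] ij Dp[of i] unfolding Di_def
      by (cases "i = j") (simp_all del: index_mult_mat)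
  qed (use Dc Dic in auto)
  have DiD: "Di * D = 1\<^sub>m N"
  proof (rule eq_matI)
    fix i j assume "i < dim_row (1\<^sub>m N :: real mat)" "j < dim_col (1\<^sub>m N :: real mat)"
    hence ij: "i < N" "j < N" by auto
    show "(Di * D) $$ (i,j) = 1\<^sub>m N $$ (i,j)"
      using diag_mult_index[OF Dic Did Dc ij] ij Dp[of i] D0[of i j] unfolding Di_def
      by (cases "i = j") (simp_all del: index_mult_mat)
  qed (use Dc Dic in auto)
  show "inv_mat D \<in> carrier_mat N N" "D * inv_mat D = 1\<^sub>m N" "inv_mat D * D = 1\<^sub>m N"
    using inv_mat_unique[OF Dc Dic DDi DiD] Dic DDi DiD by auto
qed

lemma one_pos_diag: "1\<^sub>m N \<in> pos_diag_mats N"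
  unfolding pos_diag_mats_def diagonal_mat_def by auto

lemma gen_chol_factor_inverse:
  assumes "gen_chol_factor m n K L"
  shows "L \<in> carrier_mat (m+n) (m+n)" "inv_mat L \<in> carrier_mat (m+n) (m+n)"
    "L * inv_mat L = 1\<^sub>m (m+n)" "inv_mat L * L = 1\<^sub>m (m+n)"
proof -
  have L: "L \<in> carrier_mat (m+n) (m+n)" "lower_triangular_mat L" "\<forall>i<m+n. L $$ (i,i) \<noteq> 0"
    using assms unfolding gen_chol_factor_iff by auto
  hence "invertible_mat L" using lower_triangular_invertible_iff by blast
  thus "L \<in> carrier_mat (m+n) (m+n)" "inv_mat L \<in> carrier_mat (m+n) (m+n)"
    "L * inv_mat L = 1\<^sub>m (m+n)" "inv_mat L * L = 1\<^sub>m (m+n)"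
    using inv_mat_props[OF L(1)] L(1) by auto
qed

lemma kappa2_right_scaled:
  assumes L: "L \<in> carrier_mat N N" and Li: "Li \<in> carrier_mat N N" "L * Li = 1\<^sub>m N" "Li * L = 1\<^sub>m N"
    and D: "D \<in> pos_diag_mats N"
  shows "kappa2 (L * inv_mat D) = spec_norm (L * inv_mat D) * spec_norm (D * Li)"
proof -
  have Dc: "D \<in> carrier_mat N N" using D unfolding pos_diag_mats_def by auto
  note Di = pos_diag_inv[OF D]
  have "L * inv_mat D * (D * Li) = L * ((inv_mat D * D) * Li)"
    using L Li(1) Dc Di(1) by (simp add: mult_assoc_sq[of _ N] mult_carrier_sq[of _ N]
        del: assoc_mult_mat mult_carrier_mat)
  moreover have "D * Li * (L * inv_mat D) = D * ((Li * L) * inv_mat D)"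
    using L Li(1) Dc Di(1) by (simp add: mult_assoc_sq[of _ N] mult_carrier_sq[of _ N]
        del: assoc_mult_mat mult_carrier_mat)
  ultimately have "inv_mat (L * inv_mat D) = D * Li"
    using L Li Dc Di by (intro inv_mat_unique) auto
  thus ?thesis unfolding kappa2_def by simp
qed

lemma kappa2_right_scaled_nonneg:
  assumes "gen_chol_factor m n K L" "m + n > 0" "D \<in> pos_diag_mats (m+n)"
  shows "kappa2 (L * inv_mat D) \<ge> 0"
proof -
  note L = gen_chol_factor_inverse[OF assms(1)]
  have "inv_mat D \<in> carrier_mat (m+n) (m+n)" and "D \<in> carrier_mat (m+n) (m+n)"
    using pos_diag_inv[OF assms(3)] assms(3) unfolding pos_diag_mats_def by auto
  thus ?thesis
    unfolding kappa2_right_scaled[OF L(1-4) assms(3)]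
    using spec_nonneg[of "L * inv_mat D"] spec_nonneg[of "D * inv_mat L"] L assms(2) by simp
qed

text \<open>Diagonal row scaling of the fixed-point equation: \<open>D F = lower_half (D E - (D F) J F\<^sup>T)\<close>,
  hence \<open>\<parallel>D F\<parallel>\<^sub>F \<le> \<parallel>D E\<parallel>\<^sub>F + \<parallel>D F\<parallel>\<^sub>F \<parallel>F\<parallel>\<^sub>F\<close>.\<close>
lemma diag_scaled_fixpoint_bound:
  assumes D: "D \<in> carrier_mat (m+n) (m+n)" "diagonal_mat D"
    and E: "E \<in> carrier_mat (m+n) (m+n)" and F: "F \<in> carrier_mat (m+n) (m+n)"
    and fx: "chol_map m n E F = F" and N: "m + n > 0"
  shows "frob_norm (D * F) \<le> frob_norm (D * E) + frob_norm (D * F) * frob_norm F"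
proof -
  let ?Q = "F * Jmat m n * transpose_mat F"
  have Q: "?Q \<in> carrier_mat (m+n) (m+n)" by (rule XJY_carrier[OF F F])
  have DF: "D * F \<in> carrier_mat (m+n) (m+n)" using D F by simp
  have "D * F = lower_half (D * (E - ?Q))"
    using diag_lower_half[OF D minus_carrier_mat[OF Q]] fx unfolding chol_map_def by metis
  hence "frob_norm (D * F) \<le> frob_norm (D * E - D * ?Q)"
    using frob_lower_half mult_minus_distrib_mat[OF D(1) E Q] by metis
  also have "\<dots> \<le> frob_norm (D * E) + frob_norm (D * ?Q)"
    by (rule frob_diff) (use D E Q in auto)
  also have "D * ?Q = (D * F) * Jmat m n * transpose_mat F"
    using D(1) F J_carrier[of m n]
    by (simp add: mult_assoc_sq[of _ "m+n"] mult_carrier_sq[of _ "m+n"] transpose_carrier_sq[of _ "m+n"]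
        del: assoc_mult_mat mult_carrier_mat transpose_carrier_mat)
  also have "frob_norm \<dots> \<le> frob_norm (D * F) * frob_norm F"
    by (rule XJY_frob[OF DF F N])
  finally show ?thesis by simp
qed

lemma factor_perturbation_bound:
  assumes N: "m + n > 0" and L: "L \<in> carrier_mat (m+n) (m+n)"
    and Li: "Li \<in> carrier_mat (m+n) (m+n)" "L * Li = 1\<^sub>m (m+n)" "Li * L = 1\<^sub>m (m+n)"
    and dK: "\<Delta>K \<in> carrier_mat (m+n) (m+n)" and E: "E = Li * \<Delta>K * transpose_mat Li"
    and F: "F \<in> carrier_mat (m+n) (m+n)" and fx: "chol_map m n E F = F"
    and Fb: "frob_norm F \<le> g" and g: "g < 1"
    and D: "D \<in> pos_diag_mats (m+n)"
  shows "frob_norm (L * (F * Jmat m n)) \<le> kappa2 (L * inv_mat D) * (spec_norm Li * frob_norm \<Delta>K / (1 - g))"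
proof -
  let ?N = "m + n" and ?Di = "inv_mat D"
  have Dc: "D \<in> carrier_mat ?N ?N" and Dd: "diagonal_mat D" using D unfolding pos_diag_mats_def by auto
  note Di = pos_diag_inv[OF D]
  have Ec: "E \<in> carrier_mat ?N ?N" using E Li dK by simp
  have FJ: "F * Jmat m n \<in> carrier_mat ?N ?N" using F J_carrier[of m n] by simp
  have sLD: "spec_norm (L * ?Di) \<ge> 0" using spec_nonneg[of "L * ?Di"] L Di N by simp
  have "(L * ?Di) * ((D * F) * Jmat m n) = L * ((?Di * D) * (F * Jmat m n))"
    using L Dc Di(1) F J_carrier[of m n]
    by (simp add: mult_assoc_sq[of _ ?N] mult_carrier_sq[of _ ?N] del: assoc_mult_mat mult_carrier_mat)
  hence "L * (F * Jmat m n) = (L * ?Di) * ((D * F) * Jmat m n)"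
    using Di(3) left_mult_one_mat[OF FJ] by simp
  hence "frob_norm (L * (F * Jmat m n)) = frob_norm ((L * ?Di) * ((D * F) * Jmat m n))" by simp
  also have "\<dots> \<le> spec_norm (L * ?Di) * frob_norm ((D * F) * Jmat m n)"
    by (rule frob_mult_spec) (use L Di(1) Dc F J_carrier N in auto)
  also have "frob_norm ((D * F) * Jmat m n) = frob_norm (D * F)"
    by (rule frob_mult_J) (use Dc F in auto)
  finally have "frob_norm (L * (F * Jmat m n)) \<le> spec_norm (L * ?Di) * frob_norm (D * F)" .
  moreover have "frob_norm (D * E) \<le> spec_norm (D * Li) * spec_norm Li * frob_norm \<Delta>K"
  proof -
    have "D * E = (D * Li) * \<Delta>K * transpose_mat Li"
      using E Dc Li(1) dK
      by (simp add: mult_assoc_sq[of _ ?N] mult_carrier_sq[of _ ?N] transpose_carrier_sq[of _ ?N]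
          del: assoc_mult_mat mult_carrier_mat transpose_carrier_mat)
    thus ?thesis using frob_sandwich[of "D * Li" ?N Li \<Delta>K] Dc Li dK N by simp
  qed
  moreover have "frob_norm (D * F) * frob_norm F \<le> frob_norm (D * F) * g"
    using Fb frob_nonneg by (rule mult_left_mono)
  ultimately have "frob_norm (D * F) * (1 - g) \<le> spec_norm (D * Li) * spec_norm Li * frob_norm \<Delta>K"
    using diag_scaled_fixpoint_bound[OF Dc Dd Ec F fx N] by (simp add: algebra_simps)
  hence "frob_norm (D * F) \<le> spec_norm (D * Li) * spec_norm Li * frob_norm \<Delta>K / (1 - g)"
    using g by (simp add: le_divide_eq)
  hence "frob_norm (L * (F * Jmat m n))
      \<le> spec_norm (L * ?Di) * (spec_norm (D * Li) * spec_norm Li * frob_norm \<Delta>K / (1 - g))"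
    using \<open>frob_norm (L * (F * Jmat m n)) \<le> spec_norm (L * ?Di) * frob_norm (D * F)\<close> sLD
    by (meson mult_left_mono order_trans)
  thus ?thesis unfolding kappa2_right_scaled[OF L Li D] by (simp add: mult_ac)
qed

lemma gen_chol_perturbation:
  assumes N: "m + n > 0" and L: "gen_chol_factor m n K L"
    and dK: "\<Delta>K \<in> carrier_mat (m+n) (m+n)" "transpose_mat \<Delta>K = \<Delta>K"
    and small: "(spec_norm (inv_mat L))\<^sup>2 * frob_norm \<Delta>K < 1/2"
  defines "g \<equiv> (1 - sqrt (1 - 2 * ((spec_norm (inv_mat L))\<^sup>2 * frob_norm \<Delta>K))) / sqrt 2"
  shows "\<exists>\<Delta>L. \<Delta>L \<in> carrier_mat (m+n) (m+n) \<and> gen_chol_factor m n (K + \<Delta>K) (L + \<Delta>L) \<and>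
    (\<forall>D \<in> pos_diag_mats (m+n).
       frob_norm \<Delta>L \<le> kappa2 (L * inv_mat D) * (spec_norm (inv_mat L) * frob_norm \<Delta>K / (1 - g)))"
proof -
  let ?Li = "inv_mat L" and ?J = "Jmat m n"
  define E where "E = ?Li * \<Delta>K * transpose_mat ?Li"
  note Li = gen_chol_factor_inverse[OF L]
  have Ec: "E \<in> carrier_mat (m+n) (m+n)" and Es: "transpose_mat E = E"
    using transpose_sandwich_symmetric[OF Li(2) dK] Li(2) dK(1) unfolding E_def by auto
  have "frob_norm E \<le> (spec_norm ?Li)\<^sup>2 * frob_norm \<Delta>K"
    using frob_sandwich[OF Li(2) Li(2) dK(1) N] unfolding E_def by (simp add: power2_eq_square)
  then obtain F where F: "F \<in> carrier_mat (m+n) (m+n)" and fx: "chol_map m n E F = F"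
    and Fb: "frob_norm F \<le> g"
    using chol_map_fixpoint[OF Ec Es N _ small] unfolding g_def by blast
  have g: "g < 1"
    using fixpoint_radius(4)[OF _ small] unfolding g_def
    by (simp add: spec_nonneg zero_le_mult_iff frob_nonneg)
  have "L + L * (F * ?J) = L * (1\<^sub>m (m+n) + F * ?J)"
    using mult_add_distrib_mat[OF Li(1) one_carrier_mat mult_carrier_mat[OF F J_carrier]] Li(1)
    by simp
  hence "gen_chol_factor m n (K + \<Delta>K) (L + L * (F * ?J))"
    using perturbed_gen_chol_factor[OF L Li(2,3) dK E_def F fx] Fb g by simp
  moreover have "L * (F * ?J) \<in> carrier_mat (m+n) (m+n)" using Li(1) F J_carrier[of m n] by simp
  moreover note factor_perturbation_bound[OF N Li(1-4) dK(1) E_def F fx Fb g]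
  ultimately show ?thesis by blast
qed

lemma le_mult_INF:
  fixes f :: "'a \<Rightarrow> real"
  assumes S: "S \<noteq> {}" and f: "\<And>D. D \<in> S \<Longrightarrow> 0 \<le> f D" and Q: "0 \<le> Q"
    and x: "\<And>D. D \<in> S \<Longrightarrow> x \<le> f D * Q"
  shows "x \<le> Q * (INF D \<in> S. f D)"
proof (cases "Q = 0")
  case True
  then show ?thesis using S x by force
next
  case False
  hence "x / Q \<le> f D" if "D \<in> S" for D using x[OF that] Q by (simp add: divide_le_eq)
  hence "x / Q \<le> (INF D \<in> S. f D)" by (intro cINF_greatest[OF S])
  thus ?thesis using False Q by (simp add: divide_le_eq mult.commute)
qed

lemma sqrt2_constant_bound:
  fixes a b c r :: real
  assumes "0 \<le> a" "0 \<le> b" "0 \<le> c" "0 \<le> r"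
  shows "sqrt 2 * a * b / (sqrt 2 - 1 + r) * c \<le> (2 + sqrt 2) * a * b * c"
proof -
  have "sqrt 2 > (1::real)" by simp
  hence den: "sqrt 2 - 1 + r > 0" using assms(4) by linarith
  have "(2 + sqrt 2) * (sqrt 2 - 1) = sqrt 2" by (simp add: algebra_simps)
  hence "sqrt 2 \<le> (2 + sqrt 2) * (sqrt 2 - 1 + r)"
    using assms(4) by (smt (verit) mult_left_mono real_sqrt_ge_zero)
  hence "sqrt 2 / (sqrt 2 - 1 + r) \<le> 2 + sqrt 2" using den by (simp add: divide_le_eq)
  hence "sqrt 2 / (sqrt 2 - 1 + r) * (a * b * c) \<le> (2 + sqrt 2) * (a * b * c)"
    using assms by (intro mult_right_mono) auto
  thus ?thesis by (simp add: field_simps)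
qed

text \<open>The hypotheses on \<open>A\<close>, \<open>B\<close>, \<open>C\<close> only guarantee that \<open>K\<close> has a generalized Cholesky
  factorization; the proof uses the factor \<open>L\<close> alone.  The bound for each scaling \<open>D\<close> is
  turned into a bound by the infimum, and \<open>1/(1 - g) = \<surd>2/(\<surd>2 - 1 + \<surd>(1 - 2t))\<close>.\<close>
theorem theorem3p1:
  fixes m n :: nat and A B C K L \<Delta>K :: "real mat"
  assumes "m \<ge> 1" and "n \<ge> 1"
    and "A \<in> carrier_mat m m" and "pos_def_mat A"
    and "B \<in> carrier_mat n m" and "vec_space.rank n B = n"
    and "C \<in> carrier_mat n n" and "pos_semidef_mat C"
    and "K = four_block_mat A (transpose_mat B) B (- C)"
    and "gen_chol_factor m n K L"
    and "\<Delta>K \<in> carrier_mat (m + n) (m + n)" and "symmetric_mat \<Delta>K"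
    and "(spec_norm (inv_mat L))\<^sup>2 * frob_norm \<Delta>K < 1 / 2"
  shows "\<exists>\<Delta>L. \<Delta>L \<in> carrier_mat (m + n) (m + n) \<and>
     gen_chol_factor m n (K + \<Delta>K) (L + \<Delta>L) \<and>
     frob_norm \<Delta>L \<le>
       sqrt 2 * spec_norm (inv_mat L) * (INF D \<in> pos_diag_mats (m + n). kappa2 (L * inv_mat D))
       / (sqrt 2 - 1 + sqrt (1 - 2 * (spec_norm (inv_mat L))\<^sup>2 * frob_norm \<Delta>K)) * frob_norm \<Delta>K \<and>
     sqrt 2 * spec_norm (inv_mat L) * (INF D \<in> pos_diag_mats (m + n). kappa2 (L * inv_mat D))
       / (sqrt 2 - 1 + sqrt (1 - 2 * (spec_norm (inv_mat L))\<^sup>2 * frob_norm \<Delta>K)) * frob_norm \<Delta>K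
     \<le> (2 + sqrt 2) * spec_norm (inv_mat L) * (INF D \<in> pos_diag_mats (m + n). kappa2 (L * inv_mat D))
       * frob_norm \<Delta>K"
proof -
  let ?s = "spec_norm (inv_mat L)" and ?\<epsilon> = "frob_norm \<Delta>K"
  let ?I = "INF D \<in> pos_diag_mats (m + n). kappa2 (L * inv_mat D)"
  let ?r = "sqrt (1 - 2 * ?s\<^sup>2 * ?\<epsilon>)"
  define g where "g = (1 - sqrt (1 - 2 * (?s\<^sup>2 * ?\<epsilon>))) / sqrt 2"
  have N: "m + n > 0" using assms(1) by simp
  obtain \<Delta>L where \<Delta>L: "\<Delta>L \<in> carrier_mat (m+n) (m+n)" "gen_chol_factor m n (K + \<Delta>K) (L + \<Delta>L)"
    and bound: "\<And>D. D \<in> pos_diag_mats (m+n) \<Longrightarrow> frob_norm \<Delta>L \<le> kappa2 (L * inv_mat D) * (?s * ?\<epsilon> / (1 - g))"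
    using gen_chol_perturbation[OF N assms(10,11) _ assms(13), folded g_def] assms(12)
    unfolding symmetric_mat_def by auto
  have s: "?s \<ge> 0" using spec_nonneg gen_chol_factor_inverse(2)[OF assms(10)] N by simp
  have one_minus_g: "1 - g = (sqrt 2 - 1 + ?r) / sqrt 2"
    unfolding g_def by (simp add: field_simps mult.assoc)
  have "sqrt 2 > (1::real)" by simp
  moreover have "?r \<ge> 0" using assms(13) by simp
  ultimately have "sqrt 2 - 1 + ?r > 0" by linarith
  hence Q: "?s * ?\<epsilon> / (1 - g) * ?I = sqrt 2 * ?s * ?I / (sqrt 2 - 1 + ?r) * ?\<epsilon>"
    unfolding one_minus_g by (simp add: field_simps)
  have kappa: "\<And>D. D \<in> pos_diag_mats (m+n) \<Longrightarrow> kappa2 (L * inv_mat D) \<ge> 0"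
    by (rule kappa2_right_scaled_nonneg[OF assms(10) N])
  have "?s * ?\<epsilon> / (1 - g) \<ge> 0"
    using s frob_nonneg[of \<Delta>K] \<open>sqrt 2 - 1 + ?r > 0\<close> unfolding one_minus_g by simp
  hence "frob_norm \<Delta>L \<le> sqrt 2 * ?s * ?I / (sqrt 2 - 1 + ?r) * ?\<epsilon>"
    unfolding Q[symmetric] using one_pos_diag kappa bound by (intro le_mult_INF) auto
  moreover have "?I \<ge> 0" using one_pos_diag kappa by (intro cINF_greatest) auto
  hence "sqrt 2 * ?s * ?I / (sqrt 2 - 1 + ?r) * ?\<epsilon> \<le> (2 + sqrt 2) * ?s * ?I * ?\<epsilon>"
    using s frob_nonneg \<open>?r \<ge> 0\<close> by (intro sqrt2_constant_bound)
  ultimately show ?thesis using \<Delta>L by blast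
qed

end
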